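(* The $(1,2)$ elitist black-box complexity of $\textsc{OneMax}$ (both Las Vegas and Monte Carlo) is $O(n)$. For any $\lambda\ge 2$, there are $(1,\lambda)$ Las Vegas and Monte Carlo elitist black-box algorithms that need at most $O(n/\log\lambda)$ generations on $\textsc{OneMax}$.
   Context: For $z\in\{0,1\}^n$, $\textsc{Om}_z(x)=n-\sum_{i=1}^n (x_i\oplus z_i)$; $\textsc{OneMax}=\{\textsc{Om}_z : z\in\{0,1\}^n\}$. A $(\mu,\lambda)$ elitist black-box algorithm maintains a multiset $X$ of $\mu$ search points; in each generation it samples $\lambda$ offspring from a distribution depending only on $X$ and the ranking of the fitness values in $X$ (not the values), learns the ranking of the offspring's fitness values, and the new $X$ must consist of $\mu$ offspring of highest fitness (ties broken arbitrarily; parents discarded). Runtime: number of sampled search points until an optimum is first sampled; generations counted analogously. Las Vegas complexity: min over algorithms of max over functions of expected runtime; $p$-Monte Carlo complexity: min over algorithms of smallest $T$ with success within $T$ evaluations with probability $\ge 1-p$ on every function (for every constant $p\in(0,1)$). *)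

theory Defs
  imports "HOL-Probability.Probability"
begin

text \<open>Search points of \<open>{0,1}^n\<close> are boolean lists of length n (True = 1).\<close>

definition om :: "bool list \<Rightarrow> bool list \<Rightarrow> nat" where
  "om z x = length z - (\<Sum>i<length z. if x ! i \<noteq> z ! i then 1 else 0)"

definition is_opt :: "nat \<Rightarrow> (bool list \<Rightarrow> nat) \<Rightarrow> bool list \<Rightarrow> bool" where
  "is_opt n f x \<longleftrightarrow> length x = n \<and> (\<forall>y. length y = n \<longrightarrow> f y \<le> f x)"

text \<open>Ranking of the fitness values of a list of search points: the set of index
  pairs (i,j) with f(ys_i) <= f(ys_j).  Only this is revealed to the algorithm.\<close>

definition rank :: "(bool list \<Rightarrow> nat) \<Rightarrow> bool list list \<Rightarrow> (nat \<times> nat) set" where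
  "rank f ys = {(i, j). i < length ys \<and> j < length ys \<and> f (ys ! i) \<le> f (ys ! j)}"

text \<open>An algorithm: distribution of the initial search point; the offspring
  distribution (a joint distribution of the lambda offspring), depending only on
  the current parent (mu = 1, so the ranking of X is trivial); and the (possibly
  randomized) selection of the surviving offspring, which may only use the
  parent, the offspring and the ranking of the offspring's fitness values.\<close>

record alg =
  a_init :: "bool list pmf"
  a_off  :: "bool list \<Rightarrow> bool list list pmf"
  a_sel  :: "bool list \<Rightarrow> bool list list \<Rightarrow> (nat \<times> nat) set \<Rightarrow> nat pmf"

definition elitist_1_lambda :: "nat \<Rightarrow> nat \<Rightarrow> alg \<Rightarrow> bool" where
  "elitist_1_lambda n lam A \<longleftrightarrow>
     set_pmf (a_init A) \<subseteq> {x. length x = n} \<and>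
     (\<forall>x. length x = n \<longrightarrow>
        (\<forall>ys \<in> set_pmf (a_off A x). length ys = lam \<and> (\<forall>y \<in> set ys. length y = n))) \<and>
     (\<forall>x ys (g :: bool list \<Rightarrow> nat). length ys = lam \<longrightarrow>
        set_pmf (a_sel A x ys (rank g ys)) \<subseteq>
          {i. i < lam \<and> (\<forall>j < lam. g (ys ! j) \<le> g (ys ! i))})"

text \<open>Starting from a (non-optimal) parent x, the distribution of the number of
  further generations until an optimum of f is first sampled, truncated at t
  generations (None = no optimum sampled within t generations).\<close>

primrec gen_run :: "alg \<Rightarrow> nat \<Rightarrow> (bool list \<Rightarrow> nat) \<Rightarrow> nat \<Rightarrow> bool list \<Rightarrow> nat option pmf" where
  "gen_run A n f 0 x = return_pmf None"
| "gen_run A n f (Suc t) x =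
     bind_pmf (a_off A x) (\<lambda>ys.
       if (\<exists>y \<in> set ys. is_opt n f y) then return_pmf (Some 1)
       else bind_pmf (a_sel A x ys (rank f ys))
              (\<lambda>i. map_pmf (map_option Suc) (gen_run A n f t (ys ! i))))"

definition gens_dist :: "alg \<Rightarrow> nat \<Rightarrow> (bool list \<Rightarrow> nat) \<Rightarrow> nat \<Rightarrow> nat option pmf" where
  "gens_dist A n f t =
     bind_pmf (a_init A) (\<lambda>x. if is_opt n f x then return_pmf (Some 0) else gen_run A n f t x)"

definition prob_gens_le :: "alg \<Rightarrow> nat \<Rightarrow> (bool list \<Rightarrow> nat) \<Rightarrow> nat \<Rightarrow> real" where
  "prob_gens_le A n f t = measure_pmf.prob (gens_dist A n f t) (range Some)"

text \<open>The runtime (number of evaluated search points) is R = 1 + lam * G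
  (initial point plus lam offspring per generation).  P(R <= T):\<close>
definition prob_evals_le :: "alg \<Rightarrow> nat \<Rightarrow> nat \<Rightarrow> (bool list \<Rightarrow> nat) \<Rightarrow> nat \<Rightarrow> real" where
  "prob_evals_le A n lam f T =
     measure_pmf.prob (gens_dist A n f T) {Some g | g. 1 + lam * g \<le> T}"

text \<open>Expectations via the tail-sum formula E[X] = sum_t P(X > t).\<close>
definition exp_gens :: "alg \<Rightarrow> nat \<Rightarrow> (bool list \<Rightarrow> nat) \<Rightarrow> ennreal" where
  "exp_gens A n f = (\<Sum>t. ennreal (1 - prob_gens_le A n f t))"

definition exp_evals :: "alg \<Rightarrow> nat \<Rightarrow> nat \<Rightarrow> (bool list \<Rightarrow> nat) \<Rightarrow> ennreal" where
  "exp_evals A n lam f = (\<Sum>s. ennreal (1 - prob_evals_le A n lam f s))"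

end

theory Submission
  imports Defs
begin

text \<open>The algorithm is deterministic and learns the hidden string \<open>z\<close> in blocks of
  \<open>k = \<lfloor>log\<^sub>2 \<lambda>\<rfloor>\<close> bits. The parent agrees with \<open>z\<close> on a prefix of length \<open>m\<close>,
  followed by a single 1 and then 0s; only the position of this last 1 has to be
  remembered, and it can be read off the parent itself. The offspring keep the
  prefix, try all \<open>2\<^sup>k\<close> patterns on the next \<open>k\<close> positions and move the marker
  \<open>k\<close> positions to the right. As all offspring agree outside the tried block, the
  fittest one carries the correct block, so after \<open>\<lceil>n / k\<rceil>\<close> generations the optimum
  has been sampled with certainty. Since \<open>k \<ge> ln \<lambda> / 2\<close>, this gives
  \<open>O(n / log \<lambda>)\<close> generations, and for \<open>\<lambda> = 2\<close> (\<open>k = 1\<close>) \<open>O(n)\<close> evaluations.\<close>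

fun hamming :: "bool list \<Rightarrow> bool list \<Rightarrow> nat" where
  "hamming (a # as) (b # bs) = (if a \<noteq> b then 1 else 0) + hamming as bs"
| "hamming _ _ = 0"

lemma sum_mismatches_eq_hamming:
  "length x = length z \<Longrightarrow> (\<Sum>i<length z. if x ! i \<noteq> z ! i then 1 else 0) = hamming x z"
proof (induction x arbitrary: z)
  case (Cons a as)
  then obtain b bs where "z = b # bs" by (cases z) auto
  with Cons show ?case by (simp add: sum.lessThan_Suc_shift del: sum.lessThan_Suc)
qed simp

lemma om_eq_length_minus_hamming: "length x = length z \<Longrightarrow> om z x = length z - hamming x z"
  unfolding om_def by (subst sum_mismatches_eq_hamming) auto

lemma hamming_append:
  "length a = length c \<Longrightarrow> hamming (a @ b) (c @ d) = hamming a c + hamming b d"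
  by (induction a c rule: hamming.induct) auto

lemma hamming_self [simp]: "hamming x x = 0"
  by (induction x) auto

lemma hamming_le_length: "hamming x y \<le> length y"
  by (induction x y rule: hamming.induct) auto

lemma hamming_eq_0_iff: "length x = length y \<Longrightarrow> hamming x y = 0 \<longleftrightarrow> x = y"
  by (induction x y rule: hamming.induct) auto

lemma is_opt_om_self: "length z = n \<Longrightarrow> is_opt n (om z) z"
  by (auto simp: is_opt_def om_def)

lemma om_ge_correct_block_imp_eq:
  assumes "length u = length a" "length q = length b" "length v = length r"
    and "om (a @ b @ r) (u @ b @ v) \<le> om (a @ b @ r) (u @ q @ v)"
  shows "q = b"
proof -
  have "hamming (u @ q @ v) (a @ b @ r) \<le> hamming (u @ b @ v) (a @ b @ r)"
    using assms hamming_le_length[of "u @ b @ v" "a @ b @ r"] hamming_le_length[of "u @ q @ v" "a @ b @ r"]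
    by (simp add: om_eq_length_minus_hamming)
  then have "hamming q b = 0"
    using assms by (simp add: hamming_append)
  with assms(2) show ?thesis by (simp add: hamming_eq_0_iff)
qed

definition marker_pos :: "bool list \<Rightarrow> nat" where
  "marker_pos x = length (dropWhile Not (rev x)) - 1"

lemma marker_pos_le_length: "marker_pos x \<le> length x"
  unfolding marker_pos_def using length_dropWhile_le[of Not "rev x"] by simp

text \<open>If fewer than \<open>k\<close> positions remain, the block is shortened to \<open>d\<close> and no marker
  is appended. Offspring beyond the \<open>2\<^sup>d\<close> patterns are padding.\<close>

definition offspring :: "nat \<Rightarrow> nat \<Rightarrow> nat \<Rightarrow> bool list \<Rightarrow> bool list list" where
  "offspring n lam k x = (let m = marker_pos x; d = min k (n - m);
     tl = (if m + d < n then True # replicate (n - m - d - 1) False else []);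
     ps = List.n_lists d [False, True] @ replicate (lam - 2 ^ d) (replicate d False)
   in map (\<lambda>p. take m x @ p @ tl) ps)"

definition select_best :: "bool list list \<Rightarrow> (nat \<times> nat) set \<Rightarrow> nat" where
  "select_best ys R = (LEAST i. i < length ys \<and> (\<forall>j<length ys. (j, i) \<in> R))"

definition block_alg :: "nat \<Rightarrow> nat \<Rightarrow> nat \<Rightarrow> alg" where
  "block_alg n lam k = \<lparr>a_init = return_pmf (True # replicate (n - 1) False),
     a_off = (\<lambda>x. return_pmf (offspring n lam k x)),
     a_sel = (\<lambda>x ys R. return_pmf (select_best ys R))\<rparr>"

lemma block_alg_simps [simp]:
  "a_init (block_alg n lam k) = return_pmf (True # replicate (n - 1) False)"
  "a_off (block_alg n lam k) = (\<lambda>x. return_pmf (offspring n lam k x))"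
  "a_sel (block_alg n lam k) = (\<lambda>x ys R. return_pmf (select_best ys R))"
  by (simp_all add: block_alg_def)

lemma select_best_rank:
  assumes "ys \<noteq> []"
  shows "select_best ys (rank g ys) < length ys \<and>
         (\<forall>j<length ys. g (ys ! j) \<le> g (ys ! select_best ys (rank g ys)))"
proof -
  let ?S = "(\<lambda>j. g (ys ! j)) ` {..<length ys}"
  have "finite ?S" "?S \<noteq> {}" using assms by auto
  then have "Max ?S \<in> ?S" by (rule Max_in)
  then obtain i where i: "i < length ys" "g (ys ! i) = Max ?S" by auto
  then have "\<exists>i. i < length ys \<and> (\<forall>j<length ys. (j, i) \<in> rank g ys)"
    using \<open>finite ?S\<close> by (auto simp: rank_def)
  from LeastI_ex[OF this] show ?thesis
    unfolding select_best_def by (auto simp: rank_def)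
qed

lemma length_offspring:
  assumes "length x = n" "2 ^ k \<le> lam"
  shows "length (offspring n lam k x) = lam \<and> (\<forall>y\<in>set (offspring n lam k x). length y = n)"
proof -
  define m where "m = marker_pos x"
  define d where "d = min k (n - m)"
  have "m \<le> n" using marker_pos_le_length[of x] assms m_def by simp
  moreover have "2 ^ d \<le> (2::nat) ^ k" by (simp add: d_def)
  then have "2 ^ d \<le> lam" using assms(2) by linarith
  ultimately show ?thesis
    using assms
    by (auto simp: offspring_def Let_def m_def[symmetric] d_def[symmetric]
        length_n_lists set_n_lists numeral_2_eq_2) (auto simp: d_def)
qed

lemma elitist_block_alg:
  assumes "n \<ge> 1" "2 ^ k \<le> lam"
  shows "elitist_1_lambda n lam (block_alg n lam k)"
proof -
  have "lam \<ge> 1" using assms(2) one_le_power[of "2::nat" k] by linarith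
  then have "select_best ys (rank g ys) < lam \<and> (\<forall>j<lam. g (ys ! j) \<le> g (ys ! select_best ys (rank g ys)))"
    if "length ys = lam" for ys :: "bool list list" and g :: "bool list \<Rightarrow> nat"
    using select_best_rank[of ys g] that by (auto simp flip: length_0_conv)
  then show ?thesis
    unfolding elitist_1_lambda_def using assms(1) length_offspring[OF _ assms(2)] by auto
qed

definition block_state :: "bool list \<Rightarrow> nat \<Rightarrow> bool list" where
  "block_state z m = take m z @ True # replicate (length z - m - 1) False"

lemma offspring_block_state:
  assumes "m < length z" "length z = n"
  shows "offspring n lam k (block_state z m) =
    (let d = min k (n - m);
         tl = (if m + d < n then True # replicate (n - m - d - 1) False else [])
     in map (\<lambda>p. take m z @ p @ tl)
          (List.n_lists d [False, True] @ replicate (lam - 2 ^ d) (replicate d False)))"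
proof -
  have "marker_pos (block_state z m) = m"
    using assms by (simp add: marker_pos_def block_state_def dropWhile_append)
  then show ?thesis
    using assms by (simp add: offspring_def block_state_def)
qed

lemma optimum_in_last_offspring:
  assumes "m < length z" "length z = n" "n - m \<le> k"
  shows "z \<in> set (offspring n lam k (block_state z m))"
proof -
  have "offspring n lam k (block_state z m) = map (\<lambda>p. take m z @ p)
      (List.n_lists (n - m) [False, True] @ replicate (lam - 2 ^ (n - m)) (replicate (n - m) False))"
    using assms by (simp add: offspring_block_state Let_def min_absorb2)
  moreover have "drop m z \<in> set (List.n_lists (n - m) [False, True])"
    using assms by (auto simp: set_n_lists)
  ultimately show ?thesis by (simp add: image_iff) (metis append_take_drop_id)
qed

lemma best_offspring_block_state:
  assumes "m + k < length z" "length z = n"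
    and ys: "ys = offspring n lam k (block_state z m)"
  shows "ys ! select_best ys (rank (om z) ys) = block_state z (m + k)"
proof -
  define tl where "tl = True # replicate (n - (m + k) - 1) False"
  define blk where "blk = take k (drop m z)"
  have ys_eq: "ys = map (\<lambda>p. take m z @ p @ tl)
      (List.n_lists k [False, True] @ replicate (lam - 2 ^ k) (replicate k False))"
    using assms by (simp add: ys offspring_block_state Let_def tl_def min_absorb1)
  have "ys \<noteq> []" by (simp add: ys_eq length_n_lists flip: length_0_conv)
  define i where "i = select_best ys (rank (om z) ys)"
  have i: "i < length ys" "\<forall>j<length ys. om z (ys ! j) \<le> om z (ys ! i)"
    using select_best_rank[OF \<open>ys \<noteq> []\<close>, of "om z"] by (simp_all add: i_def)
  have "\<forall>y\<in>set ys. \<exists>q. length q = k \<and> y = take m z @ q @ tl"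
    by (auto simp: ys_eq set_n_lists)
  then obtain q where q: "length q = k" "ys ! i = take m z @ q @ tl"
    using nth_mem[OF i(1)] by blast
  have best: "\<forall>y\<in>set ys. om z y \<le> om z (take m z @ q @ tl)"
    using i q(2) by (auto simp: in_set_conv_nth)
  have blk_len: "length blk = k" and tl_len: "length tl = length (drop (m + k) z)"
    using assms(1,2) by (simp_all add: blk_def tl_def)
  have "blk \<in> set (List.n_lists k [False, True])"
    using blk_len by (auto simp: set_n_lists)
  then have "take m z @ blk @ tl \<in> set ys" by (simp add: ys_eq)
  with best have "om z (take m z @ blk @ tl) \<le> om z (take m z @ q @ tl)" by blast
  moreover have "z = take m z @ blk @ drop (m + k) z"
    by (simp add: blk_def) (metis append_take_drop_id add.commute drop_drop)
  ultimately have "q = blk"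
    using om_ge_correct_block_imp_eq[of "take m z" "take m z" q blk tl "drop (m + k) z"]
      q(1) blk_len tl_len by metis
  moreover have "take m z @ blk = take (m + k) z" by (simp add: blk_def take_add)
  ultimately show ?thesis
    using q(2) assms(2) by (simp add: i_def block_state_def tl_def)
qed

lemma gen_run_block_state:
  assumes "k \<ge> 1" "length z = n"
  shows "m < n \<Longrightarrow> (n - m - 1) div k + 1 \<le> t \<Longrightarrow>
    set_pmf (gen_run (block_alg n lam k) n (om z) t (block_state z m))
      \<subseteq> Some ` {..(n - m - 1) div k + 1}"
proof (induction "n - m" arbitrary: m t rule: less_induct)
  case less
  obtain t' where t: "t = Suc t'" using less.prems by (cases t) auto
  define ys where "ys = offspring n lam k (block_state z m)"
  show ?case
  proof (cases "\<exists>y\<in>set ys. is_opt n (om z) y")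
    case True
    then show ?thesis by (simp add: t ys_def)
  next
    case False
    have "m + k < n"
    proof (rule ccontr)
      assume "\<not> m + k < n"
      then have "z \<in> set ys"
        using optimum_in_last_offspring[of m z n k lam] less.prems(1) assms(2) by (simp add: ys_def)
      with False is_opt_om_self[OF assms(2)] show False by blast
    qed
    then have step: "(n - m - 1) div k = (n - (m + k) - 1) div k + 1"
      using assms(1) div_add_self2[of k "n - (m + k) - 1"] by (simp add: Suc_diff_le)
    have IH: "set_pmf (gen_run (block_alg n lam k) n (om z) t' (block_state z (m + k)))
        \<subseteq> Some ` {..(n - (m + k) - 1) div k + 1}"
      using less.hyps[of "m + k" t'] less.prems \<open>m + k < n\<close> assms(1) step t by simp
    have "ys ! select_best ys (rank (om z) ys) = block_state z (m + k)"
      using best_offspring_block_state \<open>m + k < n\<close> assms(2) ys_def by blast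
    then have "gen_run (block_alg n lam k) n (om z) t (block_state z m) =
        map_pmf (map_option Suc) (gen_run (block_alg n lam k) n (om z) t' (block_state z (m + k)))"
      using False by (simp add: t ys_def[symmetric] bind_return_pmf)
    with IH step show ?thesis by auto
  qed
qed

lemma gens_dist_block_alg:
  assumes "n \<ge> 1" "k \<ge> 1" "length z = n" "(n - 1) div k + 1 \<le> t"
  shows "set_pmf (gens_dist (block_alg n lam k) n (om z) t) \<subseteq> Some ` {..(n - 1) div k + 1}"
proof -
  have "True # replicate (n - 1) False = block_state z 0"
    using assms by (simp add: block_state_def)
  then show ?thesis
    using gen_run_block_state[OF assms(2,3), of 0 t] assms
    by (auto simp: gens_dist_def bind_return_pmf)
qed

lemma prob_eq_1_if_set_pmf_subset: "set_pmf M \<subseteq> E \<Longrightarrow> measure_pmf.prob M E = 1"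
  by (subst measure_pmf.prob_eq_1) (auto intro: AE_pmfI)

lemma prob_gens_le_block_alg:
  assumes "n \<ge> 1" "k \<ge> 1" "length z = n" "(n - 1) div k + 1 \<le> t"
  shows "prob_gens_le (block_alg n lam k) n (om z) t = 1"
  unfolding prob_gens_le_def
  using gens_dist_block_alg[OF assms] by (blast intro: prob_eq_1_if_set_pmf_subset)

lemma prob_evals_le_block_alg:
  assumes "n \<ge> 1" "k \<ge> 1" "length z = n" "lam \<ge> 1" "1 + lam * ((n - 1) div k + 1) \<le> T"
  shows "prob_evals_le (block_alg n lam k) n lam (om z) T = 1"
proof -
  have "(n - 1) div k + 1 \<le> T"
    using assms(4,5) by (cases lam) auto
  note support = gens_dist_block_alg[OF assms(1-3) this]
  have "1 + lam * g \<le> T" if "g \<le> (n - 1) div k + 1" for g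
    using mult_le_mono2[OF that, of lam] assms(5) by linarith
  then have "Some ` {..(n - 1) div k + 1} \<subseteq> {Some g | g. 1 + lam * g \<le> T}"
    by auto
  with support show ?thesis
    unfolding prob_evals_le_def by (blast intro: prob_eq_1_if_set_pmf_subset)
qed

lemma suminf_one_minus_le:
  fixes P :: "nat \<Rightarrow> real"
  assumes "\<And>t. K \<le> t \<Longrightarrow> P t = 1" "\<And>t. P t \<ge> 0"
  shows "(\<Sum>t. ennreal (1 - P t)) \<le> of_nat K"
proof -
  have "(\<Sum>t. ennreal (1 - P t)) = (\<Sum>t<K. ennreal (1 - P t))"
    by (rule suminf_finite) (use assms in auto)
  also have "\<dots> \<le> (\<Sum>t<K. 1)"
    by (rule sum_mono) (use assms in \<open>auto simp: ennreal_le_1\<close>)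
  finally show ?thesis by simp
qed

lemma exp_gens_block_alg:
  assumes "n \<ge> 1" "k \<ge> 1" "length z = n"
  shows "exp_gens (block_alg n lam k) n (om z) \<le> of_nat ((n - 1) div k + 1)"
  unfolding exp_gens_def
  by (rule suminf_one_minus_le) (use prob_gens_le_block_alg[OF assms] in \<open>auto simp: prob_gens_le_def\<close>)

lemma exp_evals_block_alg:
  assumes "n \<ge> 1" "k \<ge> 1" "length z = n" "lam \<ge> 1"
  shows "exp_evals (block_alg n lam k) n lam (om z) \<le> of_nat (1 + lam * ((n - 1) div k + 1))"
  unfolding exp_evals_def
  by (rule suminf_one_minus_le) (use prob_evals_le_block_alg[OF assms] in \<open>auto simp: prob_evals_le_def\<close>)

lemma ex_floor_log2:
  assumes "(lam::nat) \<ge> 2"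
  obtains k where "k \<ge> 1" "2 ^ k \<le> lam" "lam < 2 ^ (k + 1)"
proof -
  obtain k where k: "2 ^ k \<le> lam" "lam < 2 ^ (k + 1)"
    using ex_power_ivl1[of 2 lam] assms by auto
  moreover have "k \<noteq> 0" using k assms by (cases k) auto
  ultimately show thesis by (intro that) auto
qed

lemma blocks_le_log_bound:
  assumes "k \<ge> 1" "(lam::nat) \<ge> 2" "lam < 2 ^ (k + 1)"
  shows "real ((n - 1) div k + 1) \<le> 2 * (real n / ln (real lam) + 1)"
proof -
  have "k * ((n - 1) div k) \<le> n"
    using times_div_less_eq_dividend[of k "n - 1"] by linarith
  then have "real k * real ((n - 1) div k) \<le> real n"
    by (metis of_nat_le_iff of_nat_mult)
  then have blocks: "real ((n - 1) div k) \<le> real n / real k"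
    using assms(1) by (simp add: field_simps)
  have "real lam < 2 ^ (k + 1)"
    using assms(3) by (metis of_nat_less_iff of_nat_numeral of_nat_power)
  then have "ln (real lam) < ln (2 ^ (k + 1))"
    using assms(2) by (subst ln_less_cancel_iff) auto
  also have "\<dots> = real (k + 1) * ln 2" by (rule ln_realpow)
  also have "\<dots> \<le> real (k + 1)" using ln_2_less_1 by (simp add: mult_left_le)
  finally have "ln (real lam) / 2 \<le> real k" using assms(1) by simp
  then have "real n / real k \<le> real n / (ln (real lam) / 2)"
    using assms by (intro divide_left_mono) auto
  also have "\<dots> = 2 * (real n / ln (real lam))" by simp
  finally show ?thesis using blocks by simp
qed

lemma ceiling_nat_ge: "real m \<le> x \<Longrightarrow> m \<le> nat \<lceil>x\<rceil>"
  by linarith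

lemma block_alg_two_offspring:
  assumes "n \<ge> 1" "length z = n"
  shows "exp_evals (block_alg n 2 1) n 2 (om z) \<le> ennreal (3 * real n)"
    and "prob_evals_le (block_alg n 2 1) n 2 (om z) (nat \<lceil>3 * real n\<rceil>) = 1"
proof -
  have "(n - 1) div 1 + 1 = n" using assms(1) by simp
  then have evals: "real (1 + 2 * ((n - 1) div 1 + 1)) \<le> 3 * real n" using assms(1) by simp
  have "exp_evals (block_alg n 2 1) n 2 (om z) \<le> of_nat (1 + 2 * ((n - 1) div 1 + 1))"
    by (rule exp_evals_block_alg) (use assms in auto)
  also have "\<dots> \<le> ennreal (3 * real n)"
    unfolding ennreal_of_nat_eq_real_of_nat by (rule ennreal_leI[OF evals])
  finally show "exp_evals (block_alg n 2 1) n 2 (om z) \<le> ennreal (3 * real n)" .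
  show "prob_evals_le (block_alg n 2 1) n 2 (om z) (nat \<lceil>3 * real n\<rceil>) = 1"
    by (rule prob_evals_le_block_alg) (use assms ceiling_nat_ge[OF evals] in auto)
qed

lemma block_alg_log_lambda:
  assumes "n \<ge> 1" "(lam::nat) \<ge> 2"
  obtains k where "elitist_1_lambda n lam (block_alg n lam k)"
    "\<And>z. length z = n \<Longrightarrow>
       exp_gens (block_alg n lam k) n (om z) \<le> ennreal (2 * (real n / ln (real lam) + 1))"
    "\<And>z. length z = n \<Longrightarrow>
       prob_gens_le (block_alg n lam k) n (om z) (nat \<lceil>2 * (real n / ln (real lam) + 1)\<rceil>) = 1"
proof -
  obtain k where k: "k \<ge> 1" "2 ^ k \<le> lam" "lam < 2 ^ (k + 1)"
    using ex_floor_log2[OF assms(2)] .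
  note bound = blocks_le_log_bound[OF k(1) assms(2) k(3), of n]
  show thesis
  proof (rule that[of k])
    show "elitist_1_lambda n lam (block_alg n lam k)"
      using elitist_block_alg[OF assms(1) k(2)] .
    fix z :: "bool list" assume z: "length z = n"
    show "exp_gens (block_alg n lam k) n (om z) \<le> ennreal (2 * (real n / ln (real lam) + 1))"
      using exp_gens_block_alg[OF assms(1) k(1) z] bound
      by (metis ennreal_leI ennreal_of_nat_eq_real_of_nat order_trans)
    show "prob_gens_le (block_alg n lam k) n (om z) (nat \<lceil>2 * (real n / ln (real lam) + 1)\<rceil>) = 1"
      using bound by (intro prob_gens_le_block_alg[OF assms(1) k(1) z] ceiling_nat_ge)
  qed
qed

theorem corollary2:
  shows
   "(\<exists>C :: real. \<forall>n \<ge> 1. \<exists>A. elitist_1_lambda n 2 A \<and>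
        (\<forall>z. length z = n \<longrightarrow> exp_evals A n 2 (om z) \<le> ennreal (C * real n)))
    \<and> (\<forall>p :: real. 0 < p \<and> p < 1 \<longrightarrow>
        (\<exists>C :: real. \<forall>n \<ge> 1. \<exists>A. elitist_1_lambda n 2 A \<and>
          (\<forall>z. length z = n \<longrightarrow> prob_evals_le A n 2 (om z) (nat \<lceil>C * real n\<rceil>) \<ge> 1 - p)))
    \<and> (\<exists>C :: real. \<forall>n \<ge> 1. \<forall>lam \<ge> 2. \<exists>A. elitist_1_lambda n lam A \<and>
        (\<forall>z. length z = n \<longrightarrow>
           exp_gens A n (om z) \<le> ennreal (C * (real n / ln (real lam) + 1))))
    \<and> (\<forall>p :: real. 0 < p \<and> p < 1 \<longrightarrow>
        (\<exists>C :: real. \<forall>n \<ge> 1. \<forall>lam \<ge> 2. \<exists>A. elitist_1_lambda n lam A \<and>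
          (\<forall>z. length z = n \<longrightarrow>
             prob_gens_le A n (om z) (nat \<lceil>C * (real n / ln (real lam) + 1)\<rceil>) \<ge> 1 - p)))"
proof (intro conjI allI impI)
  show "\<exists>C :: real. \<forall>n \<ge> 1. \<exists>A. elitist_1_lambda n 2 A \<and>
      (\<forall>z. length z = n \<longrightarrow> exp_evals A n 2 (om z) \<le> ennreal (C * real n))"
    using elitist_block_alg[of _ 1 2] block_alg_two_offspring(1) by (intro exI[of _ 3]) fastforce
  show "\<exists>C :: real. \<forall>n \<ge> 1. \<exists>A. elitist_1_lambda n 2 A \<and>
      (\<forall>z. length z = n \<longrightarrow> prob_evals_le A n 2 (om z) (nat \<lceil>C * real n\<rceil>) \<ge> 1 - p)"
    if "0 < p \<and> p < 1" for p
    using that elitist_block_alg[of _ 1 2] block_alg_two_offspring(2) by (intro exI[of _ 3]) fastforce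
  show "\<exists>C :: real. \<forall>n \<ge> 1. \<forall>lam \<ge> 2. \<exists>A. elitist_1_lambda n lam A \<and>
      (\<forall>z. length z = n \<longrightarrow> exp_gens A n (om z) \<le> ennreal (C * (real n / ln (real lam) + 1)))"
    by (intro exI[of _ 2] allI impI) (metis block_alg_log_lambda)
  show "\<exists>C :: real. \<forall>n \<ge> 1. \<forall>lam \<ge> 2. \<exists>A. elitist_1_lambda n lam A \<and>
      (\<forall>z. length z = n \<longrightarrow>
         prob_gens_le A n (om z) (nat \<lceil>C * (real n / ln (real lam) + 1)\<rceil>) \<ge> 1 - p)"
    if "0 < p \<and> p < 1" for p
  proof -
    have "1 - p \<le> 1" using that by simp
    then show ?thesis by (intro exI[of _ 2] allI impI) (metis block_alg_log_lambda)
  qed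
qed

end
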